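(* Let $F(y) = \frac{1}{\sqrt{\pi}} \int_{-y}^{y} e^{-x^2}\,dx$ for $y \ge 0$. Then, as $n \to \infty$, \[ \int_0^\infty (1 - F(y))^n \, dy = \frac{\sqrt{\pi}}{2(n+1)} + o(n^{-2}). \]
   Context: $F$ is the distribution function of $|Z|$ where $Z$ is a centered normal random variable with variance $1/2$. *)

theory Defs
  imports "HOL-Analysis.Analysis" "HOL-Library.Landau_Symbols"
begin

text \<open>Distribution function of |Z|, Z ~ N(0,1/2):
  F y = (1/sqrt pi) * integral over [-y,y] of exp(-x^2), for y >= 0.\<close>
definition absnormF :: "real \<Rightarrow> real" where
  "absnormF y = (1 / sqrt pi) * integral {-y..y} (\<lambda>x. exp (- (x^2)))"

end

theory Submission
  imports Defs "HOL-Probability.Probability" "HOL-Real_Asymp.Real_Asymp"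
begin

text \<open>Write \<open>T = 1 - F\<close> and \<open>b = 2 / sqrt pi\<close>, so that \<open>T' y = - b exp (-y\<^sup>2)\<close>.
  Splitting \<open>T\<^sup>n = T\<^sup>n exp (-y\<^sup>2) + T\<^sup>n (1 - exp (-y\<^sup>2))\<close>, the first term is
  \<open>-T\<^sup>n T' / b\<close> and integrates exactly to \<open>1 / (b (n + 1)) = sqrt pi / (2 (n + 1))\<close>.
  For the second term, \<open>1 - exp (-y\<^sup>2) \<le> y\<^sup>2\<close> and \<open>T y \<le> exp (- b y)\<close>: the difference
  \<open>exp (- b y) - T y\<close> vanishes at \<open>0\<close> and at infinity and increases up to \<open>y = b\<close> and
  decreases afterwards. Hence the integral of the second term is at most
  \<open>\<integral>\<^sub>0\<^sup>\<infinity> y\<^sup>2 exp (- n b y) dy = 2 / (n b)\<^sup>3 = O(n\<^sup>-\<^sup>3)\<close>.\<close>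

lemma has_integral_power_mult_neg_deriv_Ici:
  fixes G g :: "real \<Rightarrow> real" and n :: nat
  assumes deriv: "\<And>x c. a \<le> x \<Longrightarrow> x \<le> c \<Longrightarrow>
      (G has_real_derivative - g x) (at x within {a..c})"
    and cont: "continuous_on {a..} g"
    and G_nonneg: "\<And>x. a \<le> x \<Longrightarrow> 0 \<le> G x"
    and g_nonneg: "\<And>x. a \<le> x \<Longrightarrow> 0 \<le> g x"
    and lim: "(G \<longlongrightarrow> 0) at_top"
  shows "((\<lambda>x. G x ^ n * g x) has_integral G a ^ Suc n / real (Suc n)) {a..}"
proof -
  define P where "P x = - (G x ^ Suc n) / real (Suc n)" for x
  have P_deriv: "(P has_vector_derivative G x ^ n * g x) (at x within {a..y})"
    if "a \<le> x" "x \<le> y" for x y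
    unfolding has_real_derivative_iff_has_vector_derivative [symmetric] P_def [abs_def]
    by (rule DERIV_cong [OF DERIV_cdivide [OF DERIV_minus [OF DERIV_power [OF deriv [OF that]]]]]) simp
  have "((\<lambda>x. G x ^ n * g x) has_integral 0 - P a) {a..}"
  proof (rule has_integral_to_inf)
    have G_cont: "continuous_on {a..y} G" for y
      by (rule DERIV_continuous_on [OF deriv]) auto
    have g_cont: "continuous_on {a..y} g" for y
      by (rule continuous_on_subset [OF cont]) auto
    show "(\<lambda>x. G x ^ n * g x) integrable_on {a..y}" for y
      by (intro integrable_continuous_real continuous_intros G_cont g_cont)
    show "0 \<le> G x ^ n * g x" if "a \<le> x" for x
      using G_nonneg g_nonneg that by simp
    have "(P \<longlongrightarrow> 0) at_top"
      unfolding P_def [abs_def] using tendsto_minus [OF tendsto_power [OF lim, of "Suc n"]]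
      by (intro tendsto_divide_zero) simp
    then have "((\<lambda>y. P y - P a) \<longlongrightarrow> 0 - P a) at_top"
      by (intro tendsto_diff tendsto_const)
    moreover have "P y - P a = integral {a..y} (\<lambda>x. G x ^ n * g x)" if "a \<le> y" for y
      using that by (intro integral_unique [symmetric] fundamental_theorem_of_calculus P_deriv) auto
    then have "\<forall>\<^sub>F y in at_top. P y - P a = integral {a..y} (\<lambda>x. G x ^ n * g x)"
      by (rule eventually_at_top_linorderI)
    ultimately show "((\<lambda>y. integral {a..y} (\<lambda>x. G x ^ n * g x)) \<longlongrightarrow> 0 - P a) at_top"
      by (rule Lim_transform_eventually)
  qed
  moreover have "0 - P a = G a ^ Suc n / real (Suc n)"
    by (simp add: P_def)
  ultimately show ?thesis
    by (simp only:)
qed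

lemma has_integral_square_mult_exp_Ici:
  fixes c :: real
  assumes "0 < c"
  shows "((\<lambda>x. x\<^sup>2 * exp (- c * x)) has_integral 2 / c ^ 3) {0..}"
proof -
  define Q where "Q x = - exp (- c * x) * (x\<^sup>2 / c + 2 * x / c\<^sup>2 + 2 / c ^ 3)" for x
  have "((\<lambda>x. x\<^sup>2 * exp (- c * x)) has_integral 0 - Q 0) {0..}"
  proof (rule has_integral_to_inf)
    show "(\<lambda>x. x\<^sup>2 * exp (- c * x)) integrable_on {0..y}" for y
      by (intro integrable_continuous_real continuous_intros)
    show "0 \<le> x\<^sup>2 * exp (- c * x)" for x
      by simp
    have Q_deriv: "(Q has_vector_derivative x\<^sup>2 * exp (- c * x)) (at x within {0..y})" for x y
      unfolding Q_def has_real_derivative_iff_has_vector_derivative [symmetric] using assms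
      by (auto intro!: derivative_eq_intros simp: field_simps power2_eq_square power3_eq_cube)
    have "(Q \<longlongrightarrow> 0) at_top"
      unfolding Q_def using assms by real_asymp
    then have "((\<lambda>y. Q y - Q 0) \<longlongrightarrow> 0 - Q 0) at_top"
      by (intro tendsto_diff tendsto_const)
    moreover have "Q y - Q 0 = integral {0..y} (\<lambda>x. x\<^sup>2 * exp (- c * x))" if "0 \<le> y" for y
      by (rule integral_unique [OF fundamental_theorem_of_calculus [OF that Q_deriv], symmetric])
    then have "\<forall>\<^sub>F y in at_top. Q y - Q 0 = integral {0..y} (\<lambda>x. x\<^sup>2 * exp (- c * x))"
      by (rule eventually_at_top_linorderI)
    ultimately show "((\<lambda>y. integral {0..y} (\<lambda>x. x\<^sup>2 * exp (- c * x))) \<longlongrightarrow> 0 - Q 0) at_top"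
      by (rule Lim_transform_eventually)
  qed
  moreover have "0 - Q 0 = 2 / c ^ 3"
    by (simp add: Q_def)
  ultimately show ?thesis
    by (simp only:)
qed

lemma integral_Ici_le_if_le_square_mult_exp:
  fixes h :: "real \<Rightarrow> real" and c :: real
  assumes "0 < c" and cont: "continuous_on {0..} h"
    and nonneg: "\<And>x. 0 \<le> x \<Longrightarrow> 0 \<le> h x"
    and le: "\<And>x. 0 \<le> x \<Longrightarrow> h x \<le> x\<^sup>2 * exp (- c * x)"
  shows "h integrable_on {0..}" and "integral {0..} h \<le> 2 / c ^ 3"
proof -
  note dominant = has_integral_square_mult_exp_Ici [OF \<open>0 < c\<close>]
  show int: "h integrable_on {0..}"
  proof (rule measurable_bounded_by_integrable_imp_integrable_real)
    show "h \<in> borel_measurable (lebesgue_on {0..})"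
      by (rule continuous_imp_measurable_on_sets_lebesgue [OF cont]) simp
  qed (use dominant nonneg le in auto)
  have "integral {0..} h \<le> integral {0..} (\<lambda>x. x\<^sup>2 * exp (- c * x))"
    using int has_integral_integrable [OF dominant] le by (rule integral_le) simp
  also have "\<dots> = 2 / c ^ 3"
    using dominant by (rule integral_unique)
  finally show "integral {0..} h \<le> 2 / c ^ 3" .
qed

lemma continuous_on_Ici_if_continuous_on_Icc:
  fixes f :: "real \<Rightarrow> 'a::topological_space"
  assumes "\<And>b. continuous_on {a..b} f"
  shows "continuous_on {a..} f"
  unfolding continuous_on_eq_continuous_within
proof
  fix x assume "x \<in> {a..}"
  have "at x within {a..} = at x within {a..x + 1}"
    by (rule at_within_nhd [where S = "{..<x + 1}"]) auto
  moreover have "continuous (at x within {a..x + 1}) f"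
    using assms [of "x + 1"] \<open>x \<in> {a..}\<close> by (simp add: continuous_on_eq_continuous_within)
  ultimately show "continuous (at x within {a..}) f"
    by simp
qed

lemma nonneg_if_antimono_tendsto_0:
  fixes f :: "real \<Rightarrow> real"
  assumes "\<And>z. y \<le> z \<Longrightarrow> f z \<le> f y" and "(f \<longlongrightarrow> 0) at_top"
  shows "0 \<le> f y"
  using assms by (intro tendsto_upperbound [OF \<open>(f \<longlongrightarrow> 0) at_top\<close>])
    (auto intro: eventually_mono [OF eventually_ge_at_top [of y]])

lemma nonneg_if_increasing_then_decreasing:
  fixes f f' :: "real \<Rightarrow> real"
  assumes cont: "continuous_on {a..} f"
    and deriv: "\<And>x. a < x \<Longrightarrow> (f has_real_derivative f' x) (at x)"
    and incr: "\<And>x. a < x \<Longrightarrow> x < m \<Longrightarrow> 0 \<le> f' x"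
    and decr: "\<And>x. m < x \<Longrightarrow> f' x \<le> 0"
    and "f a = 0" and lim: "(f \<longlongrightarrow> 0) at_top" and "a \<le> y"
  shows "0 \<le> f y"
proof -
  have cont': "continuous_on {u..v} f" if "a \<le> u" for u v
    using cont by (rule continuous_on_subset) (use that in auto)
  show ?thesis
  proof (cases "y \<le> m")
    case True
    have "f a \<le> f y"
    proof (rule DERIV_nonneg_imp_increasing_open [OF \<open>a \<le> y\<close> _ cont'])
      fix x assume "a < x" "x < y"
      with True have "x < m"
        by simp
      with \<open>a < x\<close> show "\<exists>d. (f has_real_derivative d) (at x) \<and> 0 \<le> d"
        by (blast intro: deriv incr)
    qed simp
    with \<open>f a = 0\<close> show ?thesis
      by simp
  next
    case False
    show ?thesis
    proof (rule nonneg_if_antimono_tendsto_0 [OF _ lim])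
      fix z assume "y \<le> z"
      show "f z \<le> f y"
      proof (rule DERIV_nonpos_imp_decreasing_open [OF \<open>y \<le> z\<close> _ cont' [OF \<open>a \<le> y\<close>]])
        fix x assume "y < x" "x < z"
        with False \<open>a \<le> y\<close> have "a < x" "m < x"
          by simp_all
        then show "\<exists>d. (f has_real_derivative d) (at x) \<and> d \<le> 0"
          by (blast intro: deriv decr)
      qed
    qed
  qed
qed

definition gauss :: "real \<Rightarrow> real" where
  "gauss x = exp (- (x\<^sup>2))"

definition abs_normal_tail :: "real \<Rightarrow> real" where
  "abs_normal_tail y = 1 - 2 / sqrt pi * integral {0..y} gauss"

lemma continuous_on_gauss [continuous_intros]: "continuous_on S gauss"
  unfolding gauss_def by (intro continuous_intros)

lemma gauss_nonneg [simp]: "0 \<le> gauss x"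
  by (simp add: gauss_def)

lemma one_minus_gauss_le_square: "1 - gauss x \<le> x\<^sup>2"
  using exp_ge_add_one_self [of "- (x\<^sup>2)"] by (simp add: gauss_def)

lemma gauss_le_one: "gauss x \<le> 1"
  by (simp add: gauss_def)

lemma tendsto_integral_gauss: "((\<lambda>y. integral {0..y} gauss) \<longlongrightarrow> sqrt pi / 2) at_top"
proof -
  have "has_bochner_integral lborel (\<lambda>x. indicator {0..} x *\<^sub>R gauss x) (sqrt pi / 2)"
    using gaussian_moment_0 by (simp add: gauss_def power2_eq_square)
  then have int: "set_integrable lborel {0..} gauss"
    and val: "set_lebesgue_integral lborel {0..} gauss = sqrt pi / 2"
    by (simp_all add: has_bochner_integral_iff set_integrable_def set_lebesgue_integral_def)
  have "set_lebesgue_integral lborel {0..b} gauss = integral {0..b} gauss" for b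
    by (intro set_borel_integral_eq_integral borel_integrable_atLeastAtMost' continuous_intros)
  then show ?thesis
    using tendsto_set_lebesgue_integral_at_top [OF _ int] val by simp
qed

lemma one_minus_absnormF_eq_abs_normal_tail:
  assumes "0 \<le> y"
  shows "1 - absnormF y = abs_normal_tail y"
proof -
  have int: "gauss integrable_on {-y..y}"
    by (intro integrable_continuous_real continuous_intros)
  have "(\<lambda>x. gauss (- x)) = gauss"
    by (simp add: gauss_def fun_eq_iff)
  then have "integral {-y..0} gauss = integral {0..y} gauss"
    using Henstock_Kurzweil_Integration.integral_reflect_real [of y 0 gauss] by (simp only: minus_zero)
  then have "integral {-y..y} gauss = 2 * integral {0..y} gauss"
    using Henstock_Kurzweil_Integration.integral_combine [OF _ _ int, of 0] assms by simp
  then show ?thesis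
    by (simp add: absnormF_def abs_normal_tail_def flip: gauss_def)
qed

lemma abs_normal_tail_0 [simp]: "abs_normal_tail 0 = 1"
  by (simp add: abs_normal_tail_def)

lemma abs_normal_tail_has_derivative:
  assumes "0 \<le> x" "x \<le> c"
  shows "(abs_normal_tail has_real_derivative - (2 / sqrt pi * gauss x)) (at x within {0..c})"
proof -
  have "((\<lambda>y. integral {0..y} gauss) has_real_derivative gauss x) (at x within {0..c})"
    using assms by (intro integral_has_real_derivative continuous_intros) auto
  from DERIV_diff [OF DERIV_const [of 1] DERIV_cmult [OF this, of "2 / sqrt pi"]] show ?thesis
    unfolding abs_normal_tail_def [abs_def] by simp
qed

lemma abs_normal_tail_has_derivative_at:
  "0 < x \<Longrightarrow> (abs_normal_tail has_real_derivative - (2 / sqrt pi * gauss x)) (at x)"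
  using abs_normal_tail_has_derivative [of x "x + 1"] at_within_Icc_at [of 0 x "x + 1"] by simp

lemma continuous_on_abs_normal_tail: "continuous_on {0..} abs_normal_tail"
  by (rule continuous_on_Ici_if_continuous_on_Icc, rule DERIV_continuous_on)
    (auto intro: abs_normal_tail_has_derivative)

lemma abs_normal_tail_tendsto_0: "(abs_normal_tail \<longlongrightarrow> 0) at_top"
proof -
  have "((\<lambda>y. 1 - 2 / sqrt pi * integral {0..y} gauss) \<longlongrightarrow>
      1 - 2 / sqrt pi * (sqrt pi / 2)) at_top"
    by (intro tendsto_intros tendsto_integral_gauss)
  then show ?thesis
    by (simp add: abs_normal_tail_def [abs_def])
qed

lemma abs_normal_tail_nonneg:
  assumes "0 \<le> y"
  shows "0 \<le> abs_normal_tail y"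
proof (rule nonneg_if_antimono_tendsto_0 [OF _ abs_normal_tail_tendsto_0])
  fix z assume "y \<le> z"
  then have "integral {0..y} gauss \<le> integral {0..z} gauss"
    using assms by (intro integral_subset_le integrable_continuous_real continuous_intros) auto
  then show "abs_normal_tail z \<le> abs_normal_tail y"
    by (simp add: abs_normal_tail_def divide_right_mono)
qed

lemma abs_normal_tail_le_exp:
  assumes "0 \<le> y"
  shows "abs_normal_tail y \<le> exp (- (2 / sqrt pi) * y)"
proof -
  define b where "b = 2 / sqrt pi"
  have "0 < b"
    by (simp add: b_def)
  have "0 \<le> exp (- b * y) - abs_normal_tail y"
  proof (rule nonneg_if_increasing_then_decreasing
      [where f = "\<lambda>y. exp (- b * y) - abs_normal_tail y" and a = 0 and m = b
        and f' = "\<lambda>x. b * (gauss x - exp (- b * x))"])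
    show "continuous_on {0..} (\<lambda>y. exp (- b * y) - abs_normal_tail y)"
      by (intro continuous_intros continuous_on_abs_normal_tail)
    show "((\<lambda>y. exp (- b * y) - abs_normal_tail y) has_real_derivative
        b * (gauss x - exp (- b * x))) (at x)" if "0 < x" for x
      by (rule DERIV_cong [OF DERIV_diff [OF DERIV_fun_exp [OF DERIV_cmult [OF DERIV_ident]]
            abs_normal_tail_has_derivative_at [OF that]]])
        (simp add: b_def [symmetric] algebra_simps)
    show "0 \<le> b * (gauss x - exp (- b * x))" if "0 < x" "x < b" for x
    proof -
      have "x\<^sup>2 \<le> b * x"
        using that by (simp add: power2_eq_square mult_right_mono)
      then show ?thesis
        using \<open>0 < b\<close> by (simp add: gauss_def)
    qed
    show "b * (gauss x - exp (- b * x)) \<le> 0" if "b < x" for x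
    proof -
      have "b * x \<le> x\<^sup>2"
        using that \<open>0 < b\<close> by (simp add: power2_eq_square mult_right_mono)
      then show ?thesis
        using \<open>0 < b\<close> by (simp add: gauss_def mult_nonneg_nonpos)
    qed
    have "((\<lambda>y. exp (- b * y)) \<longlongrightarrow> 0) at_top"
      using \<open>0 < b\<close> by real_asymp
    from tendsto_diff [OF this abs_normal_tail_tendsto_0]
    show "((\<lambda>y. exp (- b * y) - abs_normal_tail y) \<longlongrightarrow> 0) at_top"
      by simp
  qed (simp_all add: assms)
  then show ?thesis
    by (simp add: b_def)
qed

lemma has_integral_abs_normal_tail_power_mult_gauss:
  "((\<lambda>y. abs_normal_tail y ^ n * gauss y) has_integral sqrt pi / (2 * (real n + 1))) {0..}"
proof -
  have "((\<lambda>y. abs_normal_tail y ^ n * (2 / sqrt pi * gauss y)) has_integral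
      abs_normal_tail 0 ^ Suc n / real (Suc n)) {0..}"
    by (intro has_integral_power_mult_neg_deriv_Ici abs_normal_tail_has_derivative
        abs_normal_tail_nonneg abs_normal_tail_tendsto_0 continuous_intros) simp_all
  then have "((\<lambda>y. sqrt pi / 2 * (abs_normal_tail y ^ n * (2 / sqrt pi * gauss y))) has_integral
      sqrt pi / 2 * (abs_normal_tail 0 ^ Suc n / real (Suc n))) {0..}"
    by (rule has_integral_mult_right)
  moreover have "(\<lambda>y. sqrt pi / 2 * (abs_normal_tail y ^ n * (2 / sqrt pi * gauss y))) =
      (\<lambda>y. abs_normal_tail y ^ n * gauss y)"
    by (simp add: fun_eq_iff)
  moreover have "sqrt pi / 2 * (abs_normal_tail 0 ^ Suc n / real (Suc n)) =
      sqrt pi / (2 * (real n + 1))"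
    by simp
  ultimately show ?thesis
    by (simp only:)
qed

lemma abs_normal_tail_power_mult_one_minus_gauss_le:
  assumes "0 \<le> y"
  shows "abs_normal_tail y ^ n * (1 - gauss y) \<le> y\<^sup>2 * exp (- (real n * (2 / sqrt pi)) * y)"
proof -
  have "abs_normal_tail y ^ n \<le> exp (- (2 / sqrt pi) * y) ^ n"
    by (intro power_mono abs_normal_tail_le_exp abs_normal_tail_nonneg assms)
  also have "\<dots> = exp (- (real n * (2 / sqrt pi)) * y)"
    by (simp flip: exp_of_nat_mult)
  finally have "abs_normal_tail y ^ n * (1 - gauss y) \<le> exp (- (real n * (2 / sqrt pi)) * y) * y\<^sup>2"
    using one_minus_gauss_le_square [of y] gauss_le_one [of y] by (intro mult_mono) auto
  then show ?thesis
    by (simp only: mult.commute)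
qed

lemma integral_one_minus_absnormF_power_bound:
  assumes "1 \<le> n"
  shows "\<bar>integral {0..} (\<lambda>y. (1 - absnormF y) ^ n) - sqrt pi / (2 * (real n + 1))\<bar>
    \<le> sqrt pi ^ 3 / (4 * real n ^ 3)"
proof -
  define c where "c = real n * (2 / sqrt pi)"
  define R where "R y = abs_normal_tail y ^ n * (1 - gauss y)" for y
  have "0 < c"
    using assms by (simp add: c_def)
  have R_nonneg: "0 \<le> R y" if "0 \<le> y" for y
    using abs_normal_tail_nonneg [OF that] gauss_le_one [of y] by (simp add: R_def)
  have "continuous_on {0..} R"
    unfolding R_def [abs_def] by (intro continuous_intros continuous_on_abs_normal_tail)
  note R_bound = integral_Ici_le_if_le_square_mult_exp [OF \<open>0 < c\<close> this R_nonneg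
      abs_normal_tail_power_mult_one_minus_gauss_le [where n = n, folded c_def R_def]]
  note gauss_part = has_integral_abs_normal_tail_power_mult_gauss [of n]
  have "integral {0..} (\<lambda>y. (1 - absnormF y) ^ n) =
      integral {0..} (\<lambda>y. abs_normal_tail y ^ n * gauss y + R y)"
    by (intro integral_cong) (simp add: one_minus_absnormF_eq_abs_normal_tail R_def algebra_simps)
  also have "\<dots> = sqrt pi / (2 * (real n + 1)) + integral {0..} R"
    using integral_add [OF has_integral_integrable [OF gauss_part] R_bound(1)]
      integral_unique [OF gauss_part] by simp
  finally have "integral {0..} (\<lambda>y. (1 - absnormF y) ^ n) - sqrt pi / (2 * (real n + 1)) =
      integral {0..} R"
    by simp
  moreover have "0 \<le> integral {0..} R"
    using R_bound(1) R_nonneg by (intro integral_nonneg) auto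
  moreover have "2 / c ^ 3 = sqrt pi ^ 3 / (4 * real n ^ 3)"
    by (simp add: c_def power_mult_distrib power_divide)
  ultimately show ?thesis
    using R_bound(2) by simp
qed

theorem theorem2:
  shows "(\<lambda>n::nat. integral {0..} (\<lambda>y. (1 - absnormF y) ^ n) - sqrt pi / (2 * (real n + 1)))
           \<in> o(\<lambda>n. 1 / (real n) ^ 2)"
proof -
  have "(\<lambda>n::nat. integral {0..} (\<lambda>y. (1 - absnormF y) ^ n) - sqrt pi / (2 * (real n + 1)))
      \<in> O(\<lambda>n. 1 / real n ^ 3)"
    by (intro bigoI [of _ "sqrt pi ^ 3 / 4"] eventually_mono [OF eventually_ge_at_top [of 1]])
      (use integral_one_minus_absnormF_power_bound in auto)
  moreover have "(\<lambda>n::nat. 1 / real n ^ 3) \<in> o(\<lambda>n. 1 / real n ^ 2)"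
    by real_asymp
  ultimately show ?thesis
    by (rule landau_o.big_small_trans)
qed

end
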